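(* Let $S$ be a commutative unital ring of positive characteristic, and let $\ell\in S$ satisfy: (i) $\ell-1$ is regular; (ii) for all positive integers $m,n$, $(\ell^m-1)\mid(\ell^n-1)$ in $S$ if and only if $m\mid n$ (in particular all positive powers of $\ell$ are distinct); (iii) $0_S$ is the only multiple of $\ell-1$ in the set $\{n\cdot 1_S: n\in\mathbb{Z}\}$. Then for every $y\in S$: (a) $y\in\operatorname{MPOW}(\ell)$ if and only if $y\in\operatorname{POW}(\ell)$ and $(\ell-1)^2\mid (y-1)$; (b) if moreover $\operatorname{char}(S)$ is a prime number, then $y\in\operatorname{PPOW}(\ell)$ if and only if $y\in\operatorname{MPOW}(\ell)$ and, for every $y'\in\operatorname{POW}(\ell)$ with $y'\neq\ell$ and $(y'-1)\mid(y-1)$, we have $y'\in\operatorname{MPOW}(\ell)$.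
   Context: An element $a\in S$ is regular if $ab=ac$ implies $b=c$. $\operatorname{POW}(\ell)=\{\ell^n:n\ge1\}$. When $\operatorname{char}(S)=c>0$: $\operatorname{MPOW}(\ell)$ is the set of powers $\ell^n$ with $n$ a positive multiple of $c$, and $\operatorname{PPOW}(\ell)$ is the set of powers $\ell^{n}$ with $n=c^k$ for some integer $k\ge1$. *)

theory Defs
  imports Main "HOL-Computational_Algebra.Primes"
begin

definition regular_elem :: "'a::comm_ring_1 \<Rightarrow> bool" where
  "regular_elem a \<longleftrightarrow> (\<forall>b c. a * b = a * c \<longrightarrow> b = c)"

definition POW :: "'a::comm_ring_1 \<Rightarrow> 'a set" where
  "POW l = {l ^ n | n. n \<ge> 1}"

definition MPOW :: "'a::comm_ring_1 \<Rightarrow> 'a set" where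
  "MPOW l = {l ^ n | n. n \<ge> 1 \<and> CHAR('a) dvd n}"

definition PPOW :: "'a::comm_ring_1 \<Rightarrow> 'a set" where
  "PPOW l = {l ^ (CHAR('a) ^ k) | k. k \<ge> 1}"

end

theory Submission
  imports Defs
begin

text \<open>
  Modulo \<open>(l - 1)\<^sup>2\<close> one has \<open>l\<^sup>n - 1 \<equiv> n (l - 1)\<close>, so by regularity of \<open>l - 1\<close> and (iii)
  the square \<open>(l - 1)\<^sup>2\<close> divides \<open>l\<^sup>n - 1\<close> exactly when \<open>n \<cdot> 1 = 0\<close>, i.e. when the
  characteristic divides \<open>n\<close>; this is (a). By (ii) the powers of \<open>l\<close> are distinct and divisibility
  among the \<open>l\<^sup>m - 1\<close> mirrors divisibility among exponents, so (b) becomes the arithmetic fact that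
  a multiple \<open>n\<close> of a prime \<open>p\<close> is a power of \<open>p\<close> iff every divisor \<open>m \<noteq> 1\<close> of \<open>n\<close> is a multiple
  of \<open>p\<close>: the \<open>p\<close>-free part of \<open>n\<close> is such a divisor unless it is \<open>1\<close>.
\<close>

lemma power_minus_one_eq_mod_square:
  fixes l :: "'a::comm_ring_1"
  shows "\<exists>k. l ^ n - 1 = (l - 1) * (of_nat n + (l - 1) * k)"
proof (induction n)
  case 0
  show ?case by (intro exI[of _ 0]) simp
next
  case (Suc n)
  then obtain k where k: "l ^ n - 1 = (l - 1) * (of_nat n + (l - 1) * k)" by blast
  have "l ^ Suc n - 1 = ((l - 1) + 1) * (l ^ n - 1) + (l - 1)" by (simp add: algebra_simps)
  also have "\<dots> = (l - 1) * (of_nat (Suc n) + (l - 1) * (k + of_nat n + (l - 1) * k))"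
    by (simp add: k algebra_simps)
  finally show ?case by blast
qed

lemma square_dvd_power_minus_one_iff:
  fixes l :: "'a::comm_ring_1"
  assumes reg: "regular_elem (l - 1)"
    and mult_int: "\<And>n::int. (l - 1) dvd (of_int n :: 'a) \<Longrightarrow> (of_int n :: 'a) = 0"
  shows "(l - 1)^2 dvd (l ^ n - 1) \<longleftrightarrow> CHAR('a) dvd n"
proof -
  obtain k where k: "l ^ n - 1 = (l - 1) * (of_nat n + (l - 1) * k)"
    using power_minus_one_eq_mod_square by blast
  have "(l - 1)^2 dvd (l ^ n - 1) \<longleftrightarrow> (l - 1) dvd (of_nat n + (l - 1) * k)"
  proof
    assume "(l - 1)^2 dvd (l ^ n - 1)"
    then obtain t where "(l - 1) * (of_nat n + (l - 1) * k) = (l - 1) * ((l - 1) * t)"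
      using k by (auto simp: power2_eq_square mult.assoc)
    then have "of_nat n + (l - 1) * k = (l - 1) * t"
      using reg unfolding regular_elem_def by blast
    then show "(l - 1) dvd (of_nat n + (l - 1) * k)" ..
  qed (auto simp: k power2_eq_square intro: mult_dvd_mono)
  also have "\<dots> \<longleftrightarrow> (l - 1) dvd (of_int (int n) :: 'a)"
    by (simp add: dvd_add_left_iff)
  also have "\<dots> \<longleftrightarrow> (of_nat n :: 'a) = 0"
    using mult_int[of "int n"] by auto
  finally show ?thesis
    by (simp add: of_nat_eq_0_iff_char_dvd)
qed

lemma prime_power_iff_nontrivial_divisors_dvd:
  fixes p n :: nat
  assumes "prime p" "n > 0"
  shows "(\<exists>k\<ge>1. n = p ^ k) \<longleftrightarrow> p dvd n \<and> (\<forall>m. m dvd n \<and> m \<noteq> 1 \<longrightarrow> p dvd m)"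
proof
  assume "\<exists>k\<ge>1. n = p ^ k"
  then obtain k where "k \<ge> 1" "n = p ^ k" by blast
  moreover have "p dvd m" if "m dvd p ^ k" "m \<noteq> 1" for m
  proof -
    obtain i where "m = p ^ i"
      using divides_primepow_nat[OF \<open>prime p\<close>] \<open>m dvd p ^ k\<close> by blast
    with \<open>m \<noteq> 1\<close> show ?thesis
      by (cases i) auto
  qed
  ultimately show "p dvd n \<and> (\<forall>m. m dvd n \<and> m \<noteq> 1 \<longrightarrow> p dvd m)"
    by (auto simp: dvd_power)
next
  assume H: "p dvd n \<and> (\<forall>m. m dvd n \<and> m \<noteq> 1 \<longrightarrow> p dvd m)"
  obtain r where r: "n = p ^ multiplicity p n * r" "\<not> p dvd r"
    using multiplicity_decompose'[of n p] assms by (auto simp: prime_nat_iff)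
  have "r = 1"
    using H r by (metis dvd_triv_right)
  moreover have "multiplicity p n \<noteq> 0"
    using H r \<open>r = 1\<close> by auto
  ultimately show "\<exists>k\<ge>1. n = p ^ k"
    using r(1) by (intro exI[of _ "multiplicity p n"]) simp
qed

locale dvd_faithful_powers =
  fixes l :: "'a::comm_ring_1"
  assumes power_minus_one_dvd_iff:
    "\<And>m n. m \<ge> 1 \<Longrightarrow> n \<ge> 1 \<Longrightarrow> (l ^ m - 1) dvd (l ^ n - 1) \<longleftrightarrow> m dvd n"
begin

lemma power_eq_power_iff: "m \<ge> 1 \<Longrightarrow> n \<ge> 1 \<Longrightarrow> l ^ m = l ^ n \<longleftrightarrow> m = n"
  using power_minus_one_dvd_iff[of m n] power_minus_one_dvd_iff[of n m]
  by (auto intro: dvd_antisym)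

lemma power_mem_MPOW_iff: "n \<ge> 1 \<Longrightarrow> l ^ n \<in> MPOW l \<longleftrightarrow> CHAR('a) dvd n"
  unfolding MPOW_def using power_eq_power_iff by auto

lemma power_mem_PPOW_iff:
  assumes "CHAR('a) > 0" "n \<ge> 1"
  shows "l ^ n \<in> PPOW l \<longleftrightarrow> (\<exists>k\<ge>1. n = CHAR('a) ^ k)"
proof -
  have "CHAR('a) ^ k \<ge> 1" for k
    using assms(1) by (simp add: Suc_le_eq)
  then show ?thesis
    unfolding PPOW_def using power_eq_power_iff[OF assms(2)] by auto
qed

lemma nontrivial_power_divisors_iff:
  assumes "n \<ge> 1"
  shows "(\<forall>y' \<in> POW l. y' \<noteq> l \<and> (y' - 1) dvd (l ^ n - 1) \<longrightarrow> y' \<in> MPOW l)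
     \<longleftrightarrow> (\<forall>m. m dvd n \<and> m \<noteq> 1 \<longrightarrow> CHAR('a) dvd m)"
proof -
  have "(l ^ m \<noteq> l \<and> (l ^ m - 1) dvd (l ^ n - 1) \<longrightarrow> l ^ m \<in> MPOW l)
      \<longleftrightarrow> (m dvd n \<and> m \<noteq> 1 \<longrightarrow> CHAR('a) dvd m)" if "m \<ge> 1" for m
    using power_eq_power_iff[OF that, of 1] power_minus_one_dvd_iff[OF that assms]
      power_mem_MPOW_iff[OF that] by auto
  moreover have "m \<ge> 1" if "m dvd n" for m
    using assms that by (auto intro: Nat.gr0I)
  ultimately show ?thesis
    unfolding POW_def by blast
qed

end

theorem lemma2p1:
  fixes l :: "'a::comm_ring_1"
  assumes char_pos: "CHAR('a) > 0"
    and reg: "regular_elem (l - 1)"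
    and dvd_iff: "\<And>m n::nat. m \<ge> 1 \<Longrightarrow> n \<ge> 1 \<Longrightarrow>
                    ((l ^ m - 1) dvd (l ^ n - 1) \<longleftrightarrow> m dvd n)"
    and mult_int: "\<And>n::int. (l - 1) dvd (of_int n :: 'a) \<Longrightarrow> (of_int n :: 'a) = 0"
  shows "(\<forall>y::'a. y \<in> MPOW l \<longleftrightarrow> (y \<in> POW l \<and> (l - 1)^2 dvd (y - 1)))
       \<and> (prime CHAR('a) \<longrightarrow>
           (\<forall>y::'a. y \<in> PPOW l \<longleftrightarrow>
              (y \<in> MPOW l \<and>
               (\<forall>y' \<in> POW l. y' \<noteq> l \<and> (y' - 1) dvd (y - 1) \<longrightarrow> y' \<in> MPOW l))))"
proof (intro conjI impI allI)
  interpret dvd_faithful_powers l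
    using dvd_iff by unfold_locales
  fix y
  show "y \<in> MPOW l \<longleftrightarrow> (y \<in> POW l \<and> (l - 1)^2 dvd (y - 1))"
    unfolding MPOW_def POW_def using square_dvd_power_minus_one_iff[OF reg mult_int] by auto
  assume prime: "prime CHAR('a)"
  show "y \<in> PPOW l \<longleftrightarrow>
          (y \<in> MPOW l \<and> (\<forall>y' \<in> POW l. y' \<noteq> l \<and> (y' - 1) dvd (y - 1) \<longrightarrow> y' \<in> MPOW l))"
  proof (cases "y \<in> POW l")
    case True
    then obtain n where "n \<ge> 1" "y = l ^ n"
      unfolding POW_def by blast
    then show ?thesis
      using power_mem_PPOW_iff[OF char_pos] power_mem_MPOW_iff nontrivial_power_divisors_iff
        prime_power_iff_nontrivial_divisors_dvd[OF prime, of n] by simp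
  next
    case False
    then show ?thesis
      unfolding PPOW_def MPOW_def POW_def using char_pos by (auto simp: Suc_le_eq)
  qed
qed

end
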